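(* Let $(A,\circ,[\cdot,\cdot])$ be a dual pre-Poisson algebra. (a) Let $T:V\to A$ be an $\mathcal{O}$-operator on $(A,\circ,[\cdot,\cdot])$ associated to a representation $(V;l_\circ,r_\circ,l_{[\cdot,\cdot]},r_{[\cdot,\cdot]})$. Define on $V$: $u\rhd_V v=l_\circ(T(u))v$, $u\lhd_V v=r_\circ(T(v))u$, $u\succ_V v=l_{[\cdot,\cdot]}(T(u))v$, $u\prec_V v=r_{[\cdot,\cdot]}(T(v))u$. Then $(V,\rhd_V,\lhd_V,\succ_V,\prec_V)$ is a pre-dual pre-Poisson algebra, and $T$ is a homomorphism of dual pre-Poisson algebras from $(V,\circ_V,[\cdot,\cdot]_V)$, where $u\circ_V v=u\rhd_V v+u\lhd_V v$ and $[u,v]_V=u\succ_V v+u\prec_V v$, to $(A,\circ,[\cdot,\cdot])$. (b) Let $P:A\to A$ be a Rota–Baxter operator on $(A,\circ,[\cdot,\cdot])$ and define $x\rhd y=P(x)\circ y$, $x\lhd y=x\circ P(y)$, $x\succ y=[P(x),y]$, $x\prec y=[x,P(y)]$. Then $(A,\rhd,\lhd,\succ,\prec)$ is a pre-dual pre-Poisson algebra, and $P$ is a homomorphism of dual pre-Poisson algebras from $(A,\circ',[\cdot,\cdot]')$, where $x\circ' y=x\rhd y+x\lhd y$ and $[x,y]'=x\succ y+x\prec y$, to $(A,\circ,[\cdot,\cdot])$.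
   Context: Field $\mathbb{F}$ of characteristic $0$. Dual pre-Poisson algebra: $x\circ(y\circ z)=(x\circ y)\circ z=(y\circ x)\circ z$; $[x,[y,z]]=[[x,y],z]+[y,[x,z]]$; $[x,y\circ z]=[x,y]\circ z+y\circ[x,z]$; $[x\circ y,z]=x\circ[y,z]+y\circ[x,z]$; $[x,y]\circ z=-[y,x]\circ z$. A homomorphism $f$ preserves both operations. A representation $(V;l_\circ,r_\circ,l_{[\cdot,\cdot]},r_{[\cdot,\cdot]})$: linear maps $A\to\mathrm{End}(V)$ with, for all $x,y$: $r_\circ(x)r_\circ(y)=r_\circ(y\circ x)=l_\circ(y)r_\circ(x)=r_\circ(x)l_\circ(y)$; $l_\circ(x\circ y)=l_\circ(x)l_\circ(y)=l_\circ(y)l_\circ(x)$; $l_{[\cdot,\cdot]}([x,y])=l_{[\cdot,\cdot]}(x)l_{[\cdot,\cdot]}(y)-l_{[\cdot,\cdot]}(y)l_{[\cdot,\cdot]}(x)$; $r_{[\cdot,\cdot]}([x,y])=r_{[\cdot,\cdot]}(y)r_{[\cdot,\cdot]}(x)+l_{[\cdot,\cdot]}(x)r_{[\cdot,\cdot]}(y)$; $r_{[\cdot,\cdot]}(x)r_{[\cdot,\cdot]}(y)=-r_{[\cdot,\cdot]}(x)l_{[\cdot,\cdot]}(y)$; $r_{[\cdot,\cdot]}(x\circ y)=r_\circ(y)r_{[\cdot,\cdot]}(x)+l_\circ(x)r_{[\cdot,\cdot]}(y)$; $l_{[\cdot,\cdot]}(x)r_\circ(y)=r_\circ(y)l_{[\cdot,\cdot]}(x)+r_\circ([x,y])$;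 $l_{[\cdot,\cdot]}(x)l_\circ(y)=l_\circ([x,y])+l_\circ(y)l_{[\cdot,\cdot]}(x)$; $r_{[\cdot,\cdot]}(x)r_\circ(y)=r_\circ([y,x])+l_\circ(y)r_{[\cdot,\cdot]}(x)$; $l_{[\cdot,\cdot]}(x\circ y)=l_\circ(x)l_{[\cdot,\cdot]}(y)+l_\circ(y)l_{[\cdot,\cdot]}(x)$; $r_{[\cdot,\cdot]}(x)(l_\circ-r_\circ)(y)=0$; $r_\circ(x)(l_{[\cdot,\cdot]}+r_{[\cdot,\cdot]})(y)=0$; $l_\circ([x,y]+[y,x])=0$. An $\mathcal{O}$-operator: linear $T:V\to A$ with $T(u)\circ T(v)=T(l_\circ(T(u))v+r_\circ(T(v))u)$ and $[T(u),T(v)]=T(l_{[\cdot,\cdot]}(T(u))v+r_{[\cdot,\cdot]}(T(v))u)$. A Rota–Baxter operator: linear $P:A\to A$ with $P(x)\circ P(y)=P(P(x)\circ y+x\circ P(y))$ and $[P(x),P(y)]=P([P(x),y]+[x,P(y)])$. A pre-dual pre-Poisson algebra: bilinear $\rhd,\lhd,\succ,\prec$ with, for all $x,y,z$: $x\lhd(y\lhd z+y\rhd z)=(x\lhd y)\lhd z=(y\rhd x)\lhd z=y\rhd(x\lhd z)$; $x\rhd(y\rhd z)=(x\lhd y+x\rhd y)\rhd z=(y\lhd x+y\rhd x)\rhd z$; $(x\prec y+x\succ y)\succ z=x\succ(y\succ z)-y\succ(x\succ z)$; $(x\succ y)\prec z=-(y\prec x)\prec z$; $x\prec(y\prec z+y\succ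 z)=(x\prec y)\prec z+y\succ(x\prec z)$; $x\prec(y\rhd z+y\lhd z)=(x\prec y)\lhd z+y\rhd(x\prec z)$; $x\succ(y\lhd z)=(x\succ y)\lhd z+y\lhd(x\succ z+x\prec z)$; $x\succ(y\rhd z)=(x\succ y+x\prec y)\rhd z+y\rhd(x\succ z)$; $(x\lhd y)\prec z=x\lhd(y\succ z+y\prec z)+y\rhd(x\prec z)$; $(x\rhd y+x\lhd y)\succ z=x\rhd(y\succ z)+y\rhd(x\succ z)$; $(x\rhd y-y\lhd x)\prec z=0$; $(x\succ y+y\prec x)\lhd z=0$; $(x\succ y+x\prec y+y\succ x+y\prec x)\rhd z=0$. *)

theory Defs
  imports Main "HOL.Vector_Spaces"
begin

definition bilin :: "('k::field \<Rightarrow> 'a::ab_group_add \<Rightarrow> 'a) \<Rightarrow> ('a \<Rightarrow> 'a \<Rightarrow> 'a) \<Rightarrow> bool" where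
  "bilin s m \<longleftrightarrow> (\<forall>x. Vector_Spaces.linear s s (m x)) \<and> (\<forall>y. Vector_Spaces.linear s s (\<lambda>x. m x y))"

definition dual_pre_poisson ::
  "('k::field \<Rightarrow> 'a::ab_group_add \<Rightarrow> 'a) \<Rightarrow> ('a \<Rightarrow> 'a \<Rightarrow> 'a) \<Rightarrow> ('a \<Rightarrow> 'a \<Rightarrow> 'a) \<Rightarrow> bool" where
  "dual_pre_poisson s circ br \<longleftrightarrow>
     vector_space s \<and> bilin s circ \<and> bilin s br \<and>
     (\<forall>x y z.
        circ x (circ y z) = circ (circ x y) z \<and>
        circ (circ x y) z = circ (circ y x) z \<and>
        br x (br y z) = br (br x y) z + br y (br x z) \<and>
        br x (circ y z) = circ (br x y) z + circ y (br x z) \<and>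
        br (circ x y) z = circ x (br y z) + circ y (br x z) \<and>
        circ (br x y) z = - circ (br y x) z)"

definition dpp_hom ::
  "('k::field \<Rightarrow> 'a::ab_group_add \<Rightarrow> 'a) \<Rightarrow> ('a \<Rightarrow> 'a \<Rightarrow> 'a) \<Rightarrow> ('a \<Rightarrow> 'a \<Rightarrow> 'a) \<Rightarrow>
   ('k \<Rightarrow> 'b::ab_group_add \<Rightarrow> 'b) \<Rightarrow> ('b \<Rightarrow> 'b \<Rightarrow> 'b) \<Rightarrow> ('b \<Rightarrow> 'b \<Rightarrow> 'b) \<Rightarrow> ('a \<Rightarrow> 'b) \<Rightarrow> bool" where
  "dpp_hom s1 circ1 br1 s2 circ2 br2 f \<longleftrightarrow>
     Vector_Spaces.linear s1 s2 f \<and>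
     (\<forall>x y. f (circ1 x y) = circ2 (f x) (f y) \<and> f (br1 x y) = br2 (f x) (f y))"

definition lin_to_end ::
  "('k::field \<Rightarrow> 'a::ab_group_add \<Rightarrow> 'a) \<Rightarrow> ('k \<Rightarrow> 'v::ab_group_add \<Rightarrow> 'v) \<Rightarrow> ('a \<Rightarrow> 'v \<Rightarrow> 'v) \<Rightarrow> bool" where
  "lin_to_end sA sV l \<longleftrightarrow>
     (\<forall>x. Vector_Spaces.linear sV sV (l x)) \<and> (\<forall>v. Vector_Spaces.linear sA sV (\<lambda>x. l x v))"

text \<open>Representation (V; lc, rc, lb, rb) of the dual pre-Poisson algebra (A, circ, br);
  compositions of endomorphisms are written pointwise.\<close>

definition dpp_rep ::
  "('k::field \<Rightarrow> 'a::ab_group_add \<Rightarrow> 'a) \<Rightarrow> ('a \<Rightarrow> 'a \<Rightarrow> 'a) \<Rightarrow> ('a \<Rightarrow> 'a \<Rightarrow> 'a) \<Rightarrow>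
   ('k \<Rightarrow> 'v::ab_group_add \<Rightarrow> 'v) \<Rightarrow> ('a \<Rightarrow> 'v \<Rightarrow> 'v) \<Rightarrow> ('a \<Rightarrow> 'v \<Rightarrow> 'v) \<Rightarrow>
   ('a \<Rightarrow> 'v \<Rightarrow> 'v) \<Rightarrow> ('a \<Rightarrow> 'v \<Rightarrow> 'v) \<Rightarrow> bool" where
  "dpp_rep sA circ br sV lc rc lb rb \<longleftrightarrow>
     vector_space sV \<and>
     lin_to_end sA sV lc \<and> lin_to_end sA sV rc \<and> lin_to_end sA sV lb \<and> lin_to_end sA sV rb \<and>
     (\<forall>x y v.
        rc x (rc y v) = rc (circ y x) v \<and>
        rc (circ y x) v = lc y (rc x v) \<and>
        lc y (rc x v) = rc x (lc y v) \<and>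
        lc (circ x y) v = lc x (lc y v) \<and>
        lc x (lc y v) = lc y (lc x v) \<and>
        lb (br x y) v = lb x (lb y v) - lb y (lb x v) \<and>
        rb (br x y) v = rb y (rb x v) + lb x (rb y v) \<and>
        rb x (rb y v) = - rb x (lb y v) \<and>
        rb (circ x y) v = rc y (rb x v) + lc x (rb y v) \<and>
        lb x (rc y v) = rc y (lb x v) + rc (br x y) v \<and>
        lb x (lc y v) = lc (br x y) v + lc y (lb x v) \<and>
        rb x (rc y v) = rc (br y x) v + lc y (rb x v) \<and>
        lb (circ x y) v = lc x (lb y v) + lc y (lb x v) \<and>
        rb x (lc y v - rc y v) = 0 \<and>
        rc x (lb y v + rb y v) = 0 \<and>
        lc (br x y + br y x) v = 0)"

definition O_operator ::
  "('k::field \<Rightarrow> 'a::ab_group_add \<Rightarrow> 'a) \<Rightarrow> ('a \<Rightarrow> 'a \<Rightarrow> 'a) \<Rightarrow> ('a \<Rightarrow> 'a \<Rightarrow> 'a) \<Rightarrow>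
   ('k \<Rightarrow> 'v::ab_group_add \<Rightarrow> 'v) \<Rightarrow> ('a \<Rightarrow> 'v \<Rightarrow> 'v) \<Rightarrow> ('a \<Rightarrow> 'v \<Rightarrow> 'v) \<Rightarrow>
   ('a \<Rightarrow> 'v \<Rightarrow> 'v) \<Rightarrow> ('a \<Rightarrow> 'v \<Rightarrow> 'v) \<Rightarrow> ('v \<Rightarrow> 'a) \<Rightarrow> bool" where
  "O_operator sA circ br sV lc rc lb rb T \<longleftrightarrow>
     Vector_Spaces.linear sV sA T \<and>
     (\<forall>u v. circ (T u) (T v) = T (lc (T u) v + rc (T v) u) \<and>
            br (T u) (T v) = T (lb (T u) v + rb (T v) u))"

definition rota_baxter ::
  "('k::field \<Rightarrow> 'a::ab_group_add \<Rightarrow> 'a) \<Rightarrow> ('a \<Rightarrow> 'a \<Rightarrow> 'a) \<Rightarrow> ('a \<Rightarrow> 'a \<Rightarrow> 'a) \<Rightarrow> ('a \<Rightarrow> 'a) \<Rightarrow> bool" where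
  "rota_baxter s circ br P \<longleftrightarrow>
     Vector_Spaces.linear s s P \<and>
     (\<forall>x y. circ (P x) (P y) = P (circ (P x) y + circ x (P y)) \<and>
            br (P x) (P y) = P (br (P x) y + br x (P y)))"

text \<open>Pre-dual pre-Poisson algebra (A, rt, lt, sc, pc), where
  rt = \<rhd>, lt = \<lhd>, sc = \<succ>, pc = \<prec>.\<close>

definition pre_dual_pre_poisson ::
  "('k::field \<Rightarrow> 'a::ab_group_add \<Rightarrow> 'a) \<Rightarrow> ('a \<Rightarrow> 'a \<Rightarrow> 'a) \<Rightarrow> ('a \<Rightarrow> 'a \<Rightarrow> 'a) \<Rightarrow>
   ('a \<Rightarrow> 'a \<Rightarrow> 'a) \<Rightarrow> ('a \<Rightarrow> 'a \<Rightarrow> 'a) \<Rightarrow> bool" where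
  "pre_dual_pre_poisson s rt lt sc pc \<longleftrightarrow>
     vector_space s \<and> bilin s rt \<and> bilin s lt \<and> bilin s sc \<and> bilin s pc \<and>
     (\<forall>x y z.
        lt x (lt y z + rt y z) = lt (lt x y) z \<and>
        lt (lt x y) z = lt (rt y x) z \<and>
        lt (rt y x) z = rt y (lt x z) \<and>
        rt x (rt y z) = rt (lt x y + rt x y) z \<and>
        rt (lt x y + rt x y) z = rt (lt y x + rt y x) z \<and>
        sc (pc x y + sc x y) z = sc x (sc y z) - sc y (sc x z) \<and>
        pc (sc x y) z = - pc (pc y x) z \<and>
        pc x (pc y z + sc y z) = pc (pc x y) z + sc y (pc x z) \<and>
        pc x (rt y z + lt y z) = lt (pc x y) z + rt y (pc x z) \<and>
        sc x (lt y z) = lt (sc x y) z + lt y (sc x z + pc x z) \<and>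
        sc x (rt y z) = rt (sc x y + pc x y) z + rt y (sc x z) \<and>
        pc (lt x y) z = lt x (sc y z + pc y z) + rt y (pc x z) \<and>
        sc (rt x y + lt x y) z = rt x (sc y z) + rt y (sc x z) \<and>
        pc (rt x y - lt y x) z = 0 \<and>
        lt (sc x y + pc y x) z = 0 \<and>
        rt (sc x y + pc x y + sc y x + pc y x) z = 0)"

end

theory Submission imports Defs begin

text \<open>An \<open>\<O>\<close>-operator \<open>T\<close> transports the representation into an algebra structure on \<open>V\<close>:
  after rewriting \<open>T u \<circ> T v\<close> and \<open>[T u, T v]\<close> by the \<open>\<O>\<close>-operator identities, every axiom
  of a pre-dual pre-Poisson algebra on \<open>V\<close> is one of the representation axioms evaluated at
  elements of the image of \<open>T\<close>, and the \<open>\<O>\<close>-operator identities themselves say that \<open>T\<close> is a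
  homomorphism.  A Rota--Baxter operator is precisely an \<open>\<O>\<close>-operator for the regular
  representation of \<open>A\<close> on itself by left and right multiplications, so (b) is (a) with
  \<open>V = A\<close>.\<close>

lemma bilin_lin_to_end_comp:
  assumes "lin_to_end sA sV l" and "Vector_Spaces.linear sV sA T"
  shows "bilin sV (\<lambda>u v. l (T u) v)" and "bilin sV (\<lambda>u v. l (T v) u)"
  using assms Vector_Spaces.linear_compose[of sV sA T sV]
  unfolding bilin_def lin_to_end_def o_def by blast+

lemma O_operator_dpp_hom:
  assumes "O_operator sA circ br sV lc rc lb rb T"
  shows "dpp_hom sV (\<lambda>u v. lc (T u) v + rc (T v) u) (\<lambda>u v. lb (T u) v + rb (T v) u)
                 sA circ br T"
  using assms unfolding O_operator_def dpp_hom_def by simp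

lemma O_operator_pre_dual_pre_poisson:
  assumes R: "dpp_rep sA circ br sV lc rc lb rb"
    and O: "O_operator sA circ br sV lc rc lb rb T"
  shows "pre_dual_pre_poisson sV (\<lambda>u v. lc (T u) v) (\<lambda>u v. rc (T v) u)
                                 (\<lambda>u v. lb (T u) v) (\<lambda>u v. rb (T v) u)"
proof -
  have linT: "Vector_Spaces.linear sV sA T"
    and T_circ: "\<And>u v. T (lc (T u) v + rc (T v) u) = circ (T u) (T v)"
    and T_br: "\<And>u v. T (lb (T u) v + rb (T v) u) = br (T u) (T v)"
    using O by (simp_all add: O_operator_def)
  have T_circ': "\<And>u v. T (rc (T v) u + lc (T u) v) = circ (T u) (T v)"
    and T_br': "\<And>u v. T (rb (T v) u + lb (T u) v) = br (T u) (T v)"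
    using T_circ T_br by (simp_all add: add.commute)
  have T_add: "T (a + b) = T a + T b" for a b
    using linT by (simp add: linear_iff)
  have rc_rc: "\<And>x y v. rc x (rc y v) = rc (circ y x) v"
   and rc_circ: "\<And>x y v. rc (circ y x) v = lc y (rc x v)"
   and lc_rc_comm: "\<And>x y v. lc y (rc x v) = rc x (lc y v)"
   and lc_circ: "\<And>x y v. lc (circ x y) v = lc x (lc y v)"
   and lc_comm: "\<And>x y v. lc x (lc y v) = lc y (lc x v)"
   and lb_br: "\<And>x y v. lb (br x y) v = lb x (lb y v) - lb y (lb x v)"
   and rb_br: "\<And>x y v. rb (br x y) v = rb y (rb x v) + lb x (rb y v)"
   and rb_rb: "\<And>x y v. rb x (rb y v) = - rb x (lb y v)"
   and rb_circ: "\<And>x y v. rb (circ x y) v = rc y (rb x v) + lc x (rb y v)"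
   and lb_rc: "\<And>x y v. lb x (rc y v) = rc y (lb x v) + rc (br x y) v"
   and lb_lc: "\<And>x y v. lb x (lc y v) = lc (br x y) v + lc y (lb x v)"
   and rb_rc: "\<And>x y v. rb x (rc y v) = rc (br y x) v + lc y (rb x v)"
   and lb_circ: "\<And>x y v. lb (circ x y) v = lc x (lb y v) + lc y (lb x v)"
   and rb_lc_minus_rc: "\<And>x y v. rb x (lc y v - rc y v) = 0"
   and rc_lb_plus_rb: "\<And>x y v. rc x (lb y v + rb y v) = 0"
   and lc_br_sym: "\<And>x y v. lc (br x y + br y x) v = 0"
   and vV: "vector_space sV"
   and ends: "lin_to_end sA sV lc" "lin_to_end sA sV rc" "lin_to_end sA sV lb" "lin_to_end sA sV rb"
    using R unfolding dpp_rep_def by blast+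
  show ?thesis
    unfolding pre_dual_pre_poisson_def
  proof (intro conjI allI vV bilin_lin_to_end_comp[OF _ linT] ends)
    fix x y z
    show "rc (T (rc (T z) y + lc (T y) z)) x = rc (T z) (rc (T y) x)"
      by (simp only: T_circ' rc_rc)
    show "rc (T z) (rc (T y) x) = rc (T z) (lc (T y) x)"
      by (simp only: rc_rc rc_circ lc_rc_comm)
    show "rc (T z) (lc (T y) x) = lc (T y) (rc (T z) x)"
      by (rule lc_rc_comm[symmetric])
    show "lc (T x) (lc (T y) z) = lc (T (rc (T y) x + lc (T x) y)) z"
      by (simp only: T_circ' lc_circ)
    show "lc (T (rc (T y) x + lc (T x) y)) z = lc (T (rc (T x) y + lc (T y) x)) z"
      by (simp only: T_circ' lc_circ, rule lc_comm)
    show "lb (T (rb (T y) x + lb (T x) y)) z = lb (T x) (lb (T y) z) - lb (T y) (lb (T x) z)"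
      by (simp only: T_br' lb_br)
    show "rb (T z) (lb (T x) y) = - rb (T z) (rb (T x) y)"
      by (simp only: rb_rb minus_minus)
    show "rb (T (rb (T z) y + lb (T y) z)) x = rb (T z) (rb (T y) x) + lb (T y) (rb (T z) x)"
      by (simp only: T_br' rb_br)
    show "rb (T (lc (T y) z + rc (T z) y)) x = rc (T z) (rb (T y) x) + lc (T y) (rb (T z) x)"
      by (simp only: T_circ rb_circ)
    show "lb (T x) (rc (T z) y) = rc (T z) (lb (T x) y) + rc (T (lb (T x) z + rb (T z) x)) y"
      by (simp only: T_br lb_rc)
    show "lb (T x) (lc (T y) z) = lc (T (lb (T x) y + rb (T y) x)) z + lc (T y) (lb (T x) z)"
      by (simp only: T_br lb_lc)
    show "rb (T z) (rc (T y) x) = rc (T (lb (T y) z + rb (T z) y)) x + lc (T y) (rb (T z) x)"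
      by (simp only: T_br rb_rc)
    show "lb (T (lc (T x) y + rc (T y) x)) z = lc (T x) (lb (T y) z) + lc (T y) (lb (T x) z)"
      by (simp only: T_circ lb_circ)
    show "rb (T z) (lc (T x) y - rc (T x) y) = 0"
      by (rule rb_lc_minus_rc)
    show "rc (T z) (lb (T x) y + rb (T x) y) = 0"
      by (rule rc_lb_plus_rb)
    have "T (lb (T x) y + rb (T y) x + lb (T y) x + rb (T x) y) = br (T x) (T y) + br (T y) (T x)"
      using T_add[of "lb (T x) y + rb (T y) x" "lb (T y) x + rb (T x) y"]
      by (simp only: T_br add.assoc)
    then show "lc (T (lb (T x) y + rb (T y) x + lb (T y) x + rb (T x) y)) z = 0"
      by (simp only: lc_br_sym)
  qed
qed

lemma dual_pre_poisson_br_br_skew: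
  assumes "dual_pre_poisson s circ br"
  shows "br (br x y) z = - br (br y x) z"
proof -
  have "br x (br y z) = br (br x y) z + br y (br x z)"
    and "br y (br x z) = br (br y x) z + br x (br y z)"
    using assms unfolding dual_pre_poisson_def by blast+
  then have "br (br x y) z + br (br y x) z = 0"
    by (simp add: algebra_simps)
  then show ?thesis
    by (simp add: eq_neg_iff_add_eq_0)
qed

lemma dpp_rep_regular:
  assumes A: "dual_pre_poisson s circ br"
  shows "dpp_rep s circ br s circ (\<lambda>x v. circ v x) br (\<lambda>x v. br v x)"
proof -
  have vA: "vector_space s" and bc: "bilin s circ" and bb: "bilin s br"
    and circ_assoc: "\<And>x y z. circ x (circ y z) = circ (circ x y) z"
    and circ_left_comm: "\<And>x y z. circ (circ x y) z = circ (circ y x) z"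
    and br_leibniz: "\<And>x y z. br x (br y z) = br (br x y) z + br y (br x z)"
    and br_circ_right: "\<And>x y z. br x (circ y z) = circ (br x y) z + circ y (br x z)"
    and br_circ_left: "\<And>x y z. br (circ x y) z = circ x (br y z) + circ y (br x z)"
    and circ_br_skew: "\<And>x y z. circ (br x y) z = - circ (br y x) z"
    using A unfolding dual_pre_poisson_def by blast+
  have circ_add_left: "circ (x + y) z = circ x z + circ y z" for x y z
    using bc by (simp add: bilin_def linear_iff)
  have br_diff_left: "br (x - y) z = br x z - br y z" for x y z
    using bb module_hom.diff[OF module_hom_linearI, of s s "\<lambda>x. br x z"]
    by (simp add: bilin_def)
  have ends: "lin_to_end s s circ" "lin_to_end s s (\<lambda>x v. circ v x)"
    "lin_to_end s s br" "lin_to_end s s (\<lambda>x v. br v x)"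
    using bc bb unfolding bilin_def lin_to_end_def by auto
  show ?thesis
    unfolding dpp_rep_def
  proof (intro conjI vA ends allI)
    fix x y v
    show "circ (circ v y) x = circ v (circ y x)" by (simp only: circ_assoc)
    show "circ v (circ y x) = circ y (circ v x)" by (simp only: circ_assoc, rule circ_left_comm)
    show "circ y (circ v x) = circ (circ y v) x" by (simp only: circ_assoc)
    show "circ (circ x y) v = circ x (circ y v)" by (simp only: circ_assoc)
    show "circ x (circ y v) = circ y (circ x v)" by (simp only: circ_assoc, rule circ_left_comm)
    show "br (br x y) v = br x (br y v) - br y (br x v)" using br_leibniz[of x y v] by (simp add: eq_diff_eq)
    show "br v (br x y) = br (br v x) y + br x (br v y)" by (rule br_leibniz)
    show "br (br v y) x = - br (br y v) x" by (rule dual_pre_poisson_br_br_skew[OF A])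
    show "br v (circ x y) = circ (br v x) y + circ x (br v y)" by (rule br_circ_right)
    show "br x (circ v y) = circ (br x v) y + circ v (br x y)" by (rule br_circ_right)
    show "br x (circ y v) = circ (br x y) v + circ y (br x v)" by (rule br_circ_right)
    show "br (circ v y) x = circ v (br y x) + circ y (br v x)" by (rule br_circ_left)
    show "br (circ x y) v = circ x (br y v) + circ y (br x v)" by (rule br_circ_left)
    show "br (circ y v - circ v y) x = 0" by (simp add: br_diff_left br_circ_left add.commute)
    show "circ (br y v + br v y) x = 0" by (simp add: circ_add_left circ_br_skew[of y v])
    show "circ (br x y + br y x) v = 0" by (simp add: circ_add_left circ_br_skew[of x y])
  qed
qed

lemma rota_baxter_iff_O_operator_regular:
  "rota_baxter s circ br P \<longleftrightarrow>
     O_operator s circ br s circ (\<lambda>x v. circ v x) br (\<lambda>x v. br v x) P"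
  unfolding rota_baxter_def O_operator_def by simp

theorem proposition3p27:
  fixes sA :: "'k::field_char_0 \<Rightarrow> 'a::ab_group_add \<Rightarrow> 'a"
    and circ br :: "'a \<Rightarrow> 'a \<Rightarrow> 'a"
    and sV :: "'k \<Rightarrow> 'v::ab_group_add \<Rightarrow> 'v"
    and lc rc lb rb :: "'a \<Rightarrow> 'v \<Rightarrow> 'v"
    and T :: "'v \<Rightarrow> 'a"
    and P :: "'a \<Rightarrow> 'a"
  assumes "dual_pre_poisson sA circ br"
  shows
    "(dpp_rep sA circ br sV lc rc lb rb \<and> O_operator sA circ br sV lc rc lb rb T \<longrightarrow>
        pre_dual_pre_poisson sV (\<lambda>u v. lc (T u) v) (\<lambda>u v. rc (T v) u)
                                (\<lambda>u v. lb (T u) v) (\<lambda>u v. rb (T v) u) \<and>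
        dpp_hom sV (\<lambda>u v. lc (T u) v + rc (T v) u) (\<lambda>u v. lb (T u) v + rb (T v) u)
                sA circ br T)
     \<and>
     (rota_baxter sA circ br P \<longrightarrow>
        pre_dual_pre_poisson sA (\<lambda>x y. circ (P x) y) (\<lambda>x y. circ x (P y))
                                (\<lambda>x y. br (P x) y) (\<lambda>x y. br x (P y)) \<and>
        dpp_hom sA (\<lambda>x y. circ (P x) y + circ x (P y)) (\<lambda>x y. br (P x) y + br x (P y))
                sA circ br P)"
proof -
  have regular: "dpp_rep sA circ br sA circ (\<lambda>x v. circ v x) br (\<lambda>x v. br v x)"
    using assms by (rule dpp_rep_regular)
  have rota_baxter_O_operator:
    "rota_baxter sA circ br P \<Longrightarrow>
       O_operator sA circ br sA circ (\<lambda>x v. circ v x) br (\<lambda>x v. br v x) P"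
    by (simp add: rota_baxter_iff_O_operator_regular)
  show ?thesis
    using O_operator_pre_dual_pre_poisson[of sA circ br sV lc rc lb rb T]
      O_operator_dpp_hom[of sA circ br sV lc rc lb rb T]
      O_operator_pre_dual_pre_poisson[OF regular rota_baxter_O_operator]
      O_operator_dpp_hom[OF rota_baxter_O_operator]
    by blast
qed

end
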